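(* Let $\sigma_2:[n]\to\{\pm1\}$ be an extended string and $\sigma_1\preceq\sigma_2$ a sign string. Let $L^{\sigma_2}_{\sigma_1}\subset\mathbb{R}^n$ be the set of all $x=(x_1,\dots,x_n)$ such that $\sigma_2(k)x_k\le0$ and $|x_k|\le1$ for all $k\in[n]$, and such that, if $k_1<\dots<k_l$ are all the indices $k\in[n]$ with $x_k=0$, then $\sigma_1$ is the reduced string of $\tau:[l]\to\{\pm1\}$, $\tau(i)=\sigma_2(k_i)$. Then $L^{\sigma_2}_{\sigma_1}$ is contractible.
   Context: $[n]=\{1,\dots,n\}$; signs $\pm$ are identified with $\pm1$. An extended string is any function $\tau:[l]\to\{\pm1\}$ with $l\ge2$ (signs may repeat); its length is $|\tau|=l$. A sign string is an extended string whose consecutive values alternate (i.e. $\tau(j+1)=-\tau(j)$ for all $j$). For extended strings $\tau_1:[l_1]\to\{\pm1\}$, $\tau_2:[l_2]\to\{\pm1\}$, $\tau_1\preceq\tau_2$ ($\tau_1$ is a substring of $\tau_2$) if $\tau_1=\tau_2\circ f$ for some strictly increasing $f:[l_1]\to[l_2]$; $\tau_1\prec\tau_2$ if moreover $\tau_1\ne\tau_2$. The reduced string of an extended string $\tau$ is the unique sign string of maximal length which is a substring of $\tau$ (obtained by deleting repetitions of consecutive equal signs). When $l<2$ the condition "$\sigma_1$ is the reduced string of $\tau$" is understood to fail. *)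

theory Defs
  imports "HOL-Analysis.Analysis" "HOL-Library.Sublist"
begin

text \<open>Strings are represented as integer lists (position j+1 of the paper is index j).
  Substring relation = subseq (embedding via strictly increasing index map).\<close>

definition ext_string :: "int list \<Rightarrow> bool" where
  "ext_string s \<longleftrightarrow> length s \<ge> 2 \<and> set s \<subseteq> {-1, 1}"

definition sign_string :: "int list \<Rightarrow> bool" where
  "sign_string s \<longleftrightarrow> ext_string s \<and> (\<forall>j. Suc j < length s \<longrightarrow> s ! Suc j = - (s ! j))"

definition reduced_string :: "int list \<Rightarrow> int list \<Rightarrow> bool" where
  "reduced_string s t \<longleftrightarrow> ext_string t \<and> sign_string s \<and> subseq s t \<and>
     (\<forall>s'. sign_string s' \<and> subseq s' t \<longrightarrow> length s' \<le> length s)"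

end

theory Submission
  imports Defs
begin

(* Let e_0 < ... < e_(m-1) (emb below) be the greedy, leftmost embedding of the sign string
   sigma1 of length m into sigma2, and let L be the set of the theorem.  L is contracted by a
   finite chain of straight-line homotopies.  The key geometric fact: L is cut out of a convex box
   by a condition on the zero set zeros x, and every interior point of a segment [x, y] in the box
   has zero set zeros x \<inter> zeros y; hence the linear homotopy from the identity to a continuous
   map g stays in L as soon as zeros x and zeros (g x) are comparable for all x.
   Stage T i consists of the points of L whose sorted zero list begins with e_0, ..., e_(i-1),
   followed by a zero of sign different from sigma1(i-1).  Setting coordinate e_i to zero
   (zero_at i) maps T i into U i, whose zero lists begin with e_0, ..., e_i; making the run of
   zeros of sign sigma1(i) directly after e_i nonzero (clear_run i, continuous thanks to a product
   of the intermediate coordinates) maps U i into T (i+1).  Finally T m consists of the points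
   with zero set exactly {e_0, ..., e_(m-1)}, which move linearly to the point centre. *)


section \<open>Reduced strings are computed by \<open>remdups_adj\<close>\<close>

lemma length_remdups_adj_Cons:
  "length (remdups_adj (a # t)) = length (remdups_adj t) + (if t \<noteq> [] \<and> hd t = a then 0 else 1)"
  by (cases t) auto

lemma length_remdups_adj_subseq:
  "subseq s t \<Longrightarrow> length (remdups_adj s) \<le> length (remdups_adj t) \<and>
     (s \<noteq> [] \<and> hd s \<noteq> hd t \<longrightarrow> length (remdups_adj s) < length (remdups_adj t))"
proof (induction t arbitrary: s)
  case Nil
  then show ?case by simp
next
  case (Cons a t)
  show ?case
  proof (cases "subseq s t")
    case True
    from Cons.IH[OF True] show ?thesis
      using True by (cases "t = []") (auto simp: length_remdups_adj_Cons)
  next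
    case False
    then obtain s' where s: "s = a # s'" and s': "subseq s' t"
      using Cons.prems by (cases s) (auto split: if_splits)
    from Cons.IH[OF s'] show ?thesis
      unfolding s using s' by (cases "s' = []"; cases "t = []") (auto simp: length_remdups_adj_Cons)
  qed
qed

lemma subseq_remdups_adj: "subseq (remdups_adj t) t"
  by (induction t rule: remdups_adj.induct) auto

definition alternating :: "int list \<Rightarrow> bool" where
  "alternating s \<longleftrightarrow> (\<forall>j. Suc j < length s \<longrightarrow> s ! Suc j = - (s ! j))"

lemma alternating_nth:
  assumes "alternating s" and "j < length s"
  shows "s ! j = hd s * (-1) ^ j"
  using assms(2)
proof (induction j)
  case 0
  then show ?case by (cases s) auto
next
  case (Suc j)
  then show ?case using assms(1) unfolding alternating_def by auto
qed

lemma alternating_eqI: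
  assumes "alternating s" "alternating r" "length s = length r" "hd s = hd r"
  shows "s = r"
  by (rule nth_equalityI) (use assms alternating_nth in auto)

lemma alternating_remdups_adj:
  assumes "set t \<subseteq> {-1, 1}"
  shows "alternating (remdups_adj t)"
  unfolding alternating_def
proof (intro allI impI)
  fix j assume j: "Suc j < length (remdups_adj t)"
  have "remdups_adj t ! Suc j \<in> set t" "remdups_adj t ! j \<in> set t"
    using j by (metis Suc_lessD nth_mem remdups_adj_set)+
  then have "remdups_adj t ! Suc j \<in> {-1, 1}" "remdups_adj t ! j \<in> {-1, 1}"
    using assms by auto
  then show "remdups_adj t ! Suc j = - (remdups_adj t ! j)"
    using remdups_adj_adjacent[OF j] by auto
qed

lemma sign_string_iff: "sign_string s \<longleftrightarrow> ext_string s \<and> alternating s"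
  unfolding sign_string_def alternating_def by simp

lemma remdups_adj_sign_string:
  assumes "sign_string s"
  shows "remdups_adj s = s"
  unfolding distinct_adj_altdef[symmetric] distinct_adj_conv_nth
proof (intro allI impI)
  fix i assume i: "Suc i < length s"
  have "s ! i \<in> {-1, 1}" using assms i unfolding sign_string_def ext_string_def
    by (meson Suc_lessD nth_mem subsetD)
  then show "s ! i \<noteq> s ! Suc i" using assms i unfolding sign_string_def by auto
qed

lemma reduced_string_iff_remdups_adj:
  assumes t: "set t \<subseteq> {-1, 1}" and s: "sign_string s"
  shows "reduced_string s t \<longleftrightarrow> remdups_adj t = s"
proof
  assume r: "remdups_adj t = s"
  have "length t \<ge> 2"
    using s remdups_adj_length[of t] unfolding r[symmetric] sign_string_def ext_string_def by linarith
  moreover have "length s' \<le> length s" if "sign_string s'" "subseq s' t" for s'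
    using length_remdups_adj_subseq[OF that(2)] remdups_adj_sign_string[OF that(1)] r by simp
  ultimately show "reduced_string s t"
    unfolding reduced_string_def ext_string_def using t s r subseq_remdups_adj by auto
next
  assume red: "reduced_string s t"
  let ?r = "remdups_adj t"
  have sub: "subseq s t" using red unfolding reduced_string_def by auto
  have s_alt: "alternating s" and s2: "length s \<ge> 2"
    using s unfolding sign_string_iff ext_string_def by auto
  have le1: "length s \<le> length ?r"
    using length_remdups_adj_subseq[OF sub] remdups_adj_sign_string[OF s] by simp
  have "sign_string ?r"
    unfolding sign_string_iff ext_string_def using le1 s2 t alternating_remdups_adj[OF t] by auto
  then have le2: "length ?r \<le> length s"
    using red subseq_remdups_adj unfolding reduced_string_def by blast
  have "hd s = hd t"
    using length_remdups_adj_subseq[OF sub] remdups_adj_sign_string[OF s] le2 s2 by fastforce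
  then show "?r = s"
    using alternating_eqI[OF alternating_remdups_adj[OF t] s_alt] le1 le2 by simp
qed


section \<open>Sorted index lists\<close>

lemma sorted_list_of_set_sorted: "sorted_wrt (<) l \<Longrightarrow> sorted_list_of_set (set l) = l"
  by (simp add: sorted_list_of_set_sort_remdups distinct_remdups_id sorted_sort_id strict_sorted_iff)

lemma subseq_map_obtain:
  "subseq s (map g ys) \<Longrightarrow> \<exists>zs. subseq zs ys \<and> s = map g zs"
proof (induction ys arbitrary: s)
  case Nil
  then show ?case by auto
next
  case (Cons y ys)
  show ?case
  proof (cases "subseq s (map g ys)")
    case True
    then show ?thesis using Cons.IH by (metis list_emb_Cons)
  next
    case False
    then obtain s' where s: "s = g y # s'" "subseq s' (map g ys)"
      using Cons.prems by (cases s) (auto split: if_splits)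
    then obtain zs where "subseq zs ys" "s' = map g zs" using Cons.IH by blast
    then show ?thesis using s by (intro exI[of _ "y # zs"]) auto
  qed
qed

lemma sorted_wrt_subseq: "subseq xs ys \<Longrightarrow> sorted_wrt P ys \<Longrightarrow> sorted_wrt P xs"
  by (induction rule: list_emb.induct) (auto dest: list_emb_set)

lemma remdups_adj_double: "remdups_adj (xs @ a # a # zs) = remdups_adj (xs @ a # zs)"
  by (metis remdups_adj.simps(3) remdups_adj_append)

lemma in_set_dropWhile_sorted:
  fixes ys :: "'a::linorder list"
  assumes "sorted_wrt (<) ys"
  shows "k \<in> set (dropWhile Q ys) \<longleftrightarrow> k \<in> set ys \<and> (\<exists>j\<in>set ys. j \<le> k \<and> \<not> Q j)"
  using assms
proof (induction ys)
  case Nil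
  then show ?case by simp
next
  case (Cons a ys)
  have lt: "\<forall>y\<in>set ys. a < y" and sorted: "sorted_wrt (<) ys" using Cons.prems by auto
  show ?case
  proof (cases "Q a")
    case True
    have "k \<in> set ys \<and> (\<exists>j\<in>set ys. j \<le> k \<and> \<not> Q j) \<longleftrightarrow>
          k \<in> set (a # ys) \<and> (\<exists>j\<in>set (a # ys). j \<le> k \<and> \<not> Q j)"
      using True lt by (auto dest: order.strict_trans1)
    then show ?thesis using True Cons.IH[OF sorted] by simp
  next
    case False
    then show ?thesis using lt by (auto intro: less_imp_le)
  qed
qed


section \<open>Linear homotopies in a sign box and chains of homotopies\<close>

definition zeros :: "real^'i \<Rightarrow> 'i set" where
  "zeros x = {k. x $ k = 0}"

definition sign_box :: "('i \<Rightarrow> real) \<Rightarrow> (real^'i) set" where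
  "sign_box s = {x. \<forall>k. s k * x $ k \<le> 0 \<and> \<bar>x $ k\<bar> \<le> 1}"

lemma convex_sign_box: "convex (sign_box s)" for s :: "'i::finite \<Rightarrow> real"
  unfolding convex_alt
proof (intro ballI allI impI)
  fix x y :: "real^'i" and u :: real
  assume "x \<in> sign_box s" "y \<in> sign_box s" and u: "0 \<le> u \<and> u \<le> 1"
  then have x: "s k * x $ k \<le> 0" "\<bar>x $ k\<bar> \<le> 1" and y: "s k * y $ k \<le> 0" "\<bar>y $ k\<bar> \<le> 1" for k
    unfolding sign_box_def by auto
  have "s k * ((1 - u) * x $ k + u * y $ k) \<le> 0" for k
  proof -
    have "s k * ((1 - u) * x $ k + u * y $ k) = (1 - u) * (s k * x $ k) + u * (s k * y $ k)"
      by (simp add: algebra_simps)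
    also have "\<dots> \<le> 0" using x y u by (simp add: add_nonpos_nonpos mult_nonneg_nonpos)
    finally show ?thesis .
  qed
  moreover have "\<bar>(1 - u) * x $ k + u * y $ k\<bar> \<le> 1" for k
  proof -
    have "\<bar>(1 - u) * x $ k + u * y $ k\<bar> \<le> (1 - u) * \<bar>x $ k\<bar> + u * \<bar>y $ k\<bar>"
      using u by (metis abs_mult abs_of_nonneg abs_triangle_ineq diff_ge_0_iff_ge)
    also have "\<dots> \<le> (1 - u) * 1 + u * 1" using x y u by (intro add_mono mult_left_mono) auto
    finally show ?thesis by simp
  qed
  ultimately show "(1 - u) *\<^sub>R x + u *\<^sub>R y \<in> sign_box s"
    unfolding sign_box_def by simp
qed

lemma convex_combination_eq_0:
  fixes a b s u :: real
  assumes "s * a \<le> 0" "s * b \<le> 0" "s \<noteq> 0" "0 < u" "u < 1"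
  shows "(1 - u) * a + u * b = 0 \<longleftrightarrow> a = 0 \<and> b = 0"
proof
  assume h: "(1 - u) * a + u * b = 0"
  have "(1 - u) * (s * a) + u * (s * b) = s * ((1 - u) * a + u * b)" by (simp add: algebra_simps)
  then have sum0: "(1 - u) * (s * a) + u * (s * b) = 0" using h by simp
  have "(1 - u) * (s * a) \<le> 0" "u * (s * b) \<le> 0"
    using assms by (simp_all add: mult_nonneg_nonpos)
  then have "(1 - u) * (s * a) = 0" "u * (s * b) = 0" using sum0 by linarith+
  then show "a = 0 \<and> b = 0" using assms(3-5) by simp
qed simp

lemma zeros_open_segment:
  assumes "x \<in> sign_box s" "y \<in> sign_box s" "\<And>k. s k \<noteq> 0" "0 < u" "u < 1"
  shows "zeros ((1 - u) *\<^sub>R x + u *\<^sub>R y) = zeros x \<inter> zeros y"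
proof -
  have "(1 - u) * x $ k + u * y $ k = 0 \<longleftrightarrow> x $ k = 0 \<and> y $ k = 0" for k
    using assms convex_combination_eq_0[of "s k" "x $ k" "y $ k" u] unfolding sign_box_def by auto
  then show ?thesis unfolding zeros_def by auto
qed

lemma homotopic_id_linear:
  fixes P :: "'i::finite set \<Rightarrow> bool"
  assumes s: "\<And>k. s k \<noteq> 0"
    and S: "S \<subseteq> {x \<in> sign_box s. P (zeros x)}"
    and g: "continuous_on S g" "g ` S \<subseteq> {x \<in> sign_box s. P (zeros x)}"
    and comparable: "\<And>x. x \<in> S \<Longrightarrow> zeros x \<subseteq> zeros (g x) \<or> zeros (g x) \<subseteq> zeros x"
  shows "homotopic_with_canon (\<lambda>_. True) S {x \<in> sign_box s. P (zeros x)} id g"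
proof (rule homotopic_with_linear[OF continuous_on_id' g(1)])
  fix x assume x: "x \<in> S"
  then have xB: "x \<in> sign_box s" "P (zeros x)" and gB: "g x \<in> sign_box s" "P (zeros (g x))"
    using S g(2) by auto
  show "closed_segment (id x) (g x) \<subseteq> {x \<in> sign_box s. P (zeros x)}"
  proof
    fix y assume "y \<in> closed_segment (id x) (g x)"
    then obtain u where u: "0 \<le> u" "u \<le> 1" and y: "y = (1 - u) *\<^sub>R x + u *\<^sub>R g x"
      unfolding closed_segment_def by auto
    have "y \<in> sign_box s"
      using convex_sign_box[of s] xB(1) gB(1) u unfolding y convex_alt by blast
    moreover have "zeros y = zeros x \<or> zeros y = zeros (g x)"
    proof (cases "u = 0 \<or> u = 1")
      case True
      then show ?thesis using y by auto
    next
      case False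
      then have "zeros y = zeros x \<inter> zeros (g x)"
        using zeros_open_segment[OF xB(1) gB(1) s] u unfolding y by simp
      then show ?thesis using comparable[OF x] by auto
    qed
    ultimately show "y \<in> {x \<in> sign_box s. P (zeros x)}" using xB gB by auto
  qed
qed

lemma homotopic_id_compose:
  assumes f: "homotopic_with_canon (\<lambda>_. True) X Y id f" and fS: "f ` X \<subseteq> S"
    and g: "homotopic_with_canon (\<lambda>_. True) S Y id g"
  shows "homotopic_with_canon (\<lambda>_. True) X Y id (g \<circ> f)"
proof -
  have "homotopic_with_canon (\<lambda>_. True) X Y (id \<circ> f) (g \<circ> f)"
    by (rule homotopic_with_compose_continuous_right[where p="\<lambda>_. True", OF g])
       (use homotopic_with_imp_continuous[OF f] fS in auto)
  then show ?thesis using homotopic_with_trans[OF f] by simp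
qed

lemma contractible_by_stages:
  fixes A :: "nat \<Rightarrow> 'a::real_normed_vector set"
  assumes steps: "\<And>i. i < n \<Longrightarrow> \<exists>g. homotopic_with_canon (\<lambda>_. True) (A i) (A 0) id g \<and> g ` A i \<subseteq> A (Suc i)"
    and last: "homotopic_with_canon (\<lambda>_. True) (A n) (A 0) id (\<lambda>_. c)"
  shows "contractible (A 0)"
proof -
  have "\<exists>\<phi>. homotopic_with_canon (\<lambda>_. True) (A 0) (A 0) id \<phi> \<and> \<phi> ` A 0 \<subseteq> A m" if "m \<le> n" for m
    using that
  proof (induction m)
    case 0
    show ?case by (intro exI[of _ id]) auto
  next
    case (Suc m)
    obtain \<phi> where \<phi>: "homotopic_with_canon (\<lambda>_. True) (A 0) (A 0) id \<phi>" "\<phi> ` A 0 \<subseteq> A m"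
      using Suc.IH Suc.prems by (meson Suc_leD)
    obtain g where g: "homotopic_with_canon (\<lambda>_. True) (A m) (A 0) id g" "g ` A m \<subseteq> A (Suc m)"
      using steps Suc.prems by (meson Suc_le_lessD)
    show ?case
      using homotopic_id_compose[OF \<phi> g(1)] \<phi>(2) g(2) by (intro exI[of _ "g \<circ> \<phi>"]) fastforce
  qed
  then obtain \<phi> where \<phi>: "homotopic_with_canon (\<lambda>_. True) (A 0) (A 0) id \<phi>" "\<phi> ` A 0 \<subseteq> A n"
    by blast
  have "homotopic_with_canon (\<lambda>_. True) (A 0) (A 0) id (\<lambda>_. c)"
    using homotopic_id_compose[OF \<phi> last] by (simp add: comp_def)
  then show ?thesis unfolding contractible_def by blast
qed


section \<open>Contracting the set \<open>L\<close>\<close>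

locale embedded_sign_string =
  fixes \<sigma>2 :: "'n::{finite,linorder} \<Rightarrow> int" and \<sigma>1 :: "int list"
  assumes sign_values: "\<And>k. \<sigma>2 k \<in> {-1, 1}"
    and sign_string_\<sigma>1: "sign_string \<sigma>1"
    and subseq_\<sigma>1: "subseq \<sigma>1 (map \<sigma>2 (sorted_list_of_set (UNIV :: 'n set)))"
begin

abbreviation sgn2 :: "('n::{finite,linorder}) \<Rightarrow> real" where
  "sgn2 k \<equiv> real_of_int (\<sigma>2 k)"

lemma sgn2_nonzero: "sgn2 k \<noteq> 0"
  using sign_values[of k] by auto

definition admissible :: "('n::{finite,linorder}) set \<Rightarrow> bool" where
  "admissible J \<longleftrightarrow> remdups_adj (map \<sigma>2 (sorted_list_of_set J)) = \<sigma>1"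

definition L :: "(real^('n::{finite,linorder})) set" where
  "L = {x \<in> sign_box sgn2. admissible (zeros x)}"

text \<open>\<open>L\<close> is the set of the theorem, since reduced strings are computed by \<open>remdups_adj\<close>.\<close>

lemma L_eq: "L = {x. (\<forall>k. real_of_int (\<sigma>2 k) * x $ k \<le> 0 \<and> \<bar>x $ k\<bar> \<le> 1) \<and>
           reduced_string \<sigma>1 (map \<sigma>2 (sorted_list_of_set {k. x $ k = 0}))}"
proof -
  have "reduced_string \<sigma>1 (map \<sigma>2 l) \<longleftrightarrow> remdups_adj (map \<sigma>2 l) = \<sigma>1" for l
    by (rule reduced_string_iff_remdups_adj[OF _ sign_string_\<sigma>1]) (use sign_values in auto)
  then show ?thesis unfolding L_def sign_box_def admissible_def zeros_def by simp
qed

lemma linear_step: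
  assumes "S \<subseteq> L" "continuous_on S g" "g ` S \<subseteq> L"
    and "\<And>x. x \<in> S \<Longrightarrow> zeros x \<subseteq> zeros (g x) \<or> zeros (g x) \<subseteq> zeros x"
  shows "homotopic_with_canon (\<lambda>_. True) S L id g"
  using assms unfolding L_def by (rule homotopic_id_linear[OF sgn2_nonzero, where P = admissible])

fun emb :: "nat \<Rightarrow> ('n::{finite,linorder})" where
  "emb 0 = Min {k. \<sigma>2 k = \<sigma>1 ! 0}"
| "emb (Suc j) = Min {k. emb j < k \<and> \<sigma>2 k = \<sigma>1 ! Suc j}"

lemma embedding_witness:
  obtains zs where "sorted_wrt (<) zs" "\<sigma>1 = map \<sigma>2 zs"
proof -
  obtain zs where zs: "subseq zs (sorted_list_of_set (UNIV :: 'n set))" "\<sigma>1 = map \<sigma>2 zs"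
    using subseq_map_obtain[OF subseq_\<sigma>1] by blast
  then show ?thesis
    using that sorted_wrt_subseq[OF zs(1)] strict_sorted_list_of_set by blast
qed

text \<open>Comparing with any embedding \<open>zs\<close>: each set in the definition of \<open>emb\<close> contains
  \<open>zs ! j\<close>, so \<open>emb j\<close> exists, carries the sign \<open>\<sigma>1 ! j\<close> and lies at or below \<open>zs ! j\<close>.\<close>

lemma emb_below_embedding:
  assumes zs: "sorted_wrt (<) zs" "\<sigma>1 = map \<sigma>2 zs" and j: "j < length \<sigma>1"
  shows "\<sigma>2 (emb j) = \<sigma>1 ! j \<and> emb j \<le> zs ! j \<and> (\<forall>i. j = Suc i \<longrightarrow> emb i < emb j)"
  using j
proof (induction j)
  case 0
  have "zs ! 0 \<in> {k. \<sigma>2 k = \<sigma>1 ! 0}" using 0 zs(2) by simp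
  then show ?case using Min_in[of "{k. \<sigma>2 k = \<sigma>1 ! 0}"] Min_le[of "{k. \<sigma>2 k = \<sigma>1 ! 0}"]
    by auto
next
  case (Suc j)
  define S where "S = {k. emb j < k \<and> \<sigma>2 k = \<sigma>1 ! Suc j}"
  have "emb j \<le> zs ! j" using Suc by simp
  moreover have "zs ! j < zs ! Suc j"
    using sorted_wrt_nth_less[OF zs(1)] Suc.prems zs(2) by simp
  ultimately have zS: "zs ! Suc j \<in> S" using Suc.prems zs(2) unfolding S_def by simp
  have fin: "finite S" by simp
  have "S \<noteq> {}" using zS by blast
  then have "Min S \<in> S" "Min S \<le> zs ! Suc j" using Min_in[OF fin] Min_le[OF fin zS] by auto
  moreover have "emb (Suc j) = Min S" unfolding S_def by simp
  ultimately show ?case unfolding S_def by simp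
qed

lemma emb_sign: "j < length \<sigma>1 \<Longrightarrow> \<sigma>2 (emb j) = \<sigma>1 ! j"
  using emb_below_embedding embedding_witness by metis

lemma emb_Suc_less: "Suc j < length \<sigma>1 \<Longrightarrow> emb j < emb (Suc j)"
  using emb_below_embedding embedding_witness by metis

lemma emb_least: "j < length \<sigma>1 \<Longrightarrow> \<sigma>2 k = \<sigma>1 ! j \<Longrightarrow> j = 0 \<or> emb (j - 1) < k \<Longrightarrow> emb j \<le> k"
  by (cases j) (auto intro: Min_le)

lemma emb_strict_mono: "b < length \<sigma>1 \<Longrightarrow> a < b \<Longrightarrow> emb a < emb b"
proof (induction b)
  case 0
  then show ?case by simp
next
  case (Suc b)
  then show ?case using emb_Suc_less[of b] by (cases "a = b") auto
qed

abbreviation greedy :: "nat \<Rightarrow> ('n::{finite,linorder}) list" where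
  "greedy i \<equiv> map emb [0..<i]"

lemma greedy_word: "i \<le> length \<sigma>1 \<Longrightarrow> map \<sigma>2 (greedy i) = take i \<sigma>1"
  by (rule nth_equalityI) (auto simp: emb_sign)

lemma remdups_adj_take_\<sigma>1: "remdups_adj (take i \<sigma>1) = take i \<sigma>1"
  using remdups_adj_sign_string[OF sign_string_\<sigma>1]
  by (metis append_take_drop_id distinct_adj_altdef distinct_adj_appendD1)

lemma reduced_rest:
  assumes i: "i \<le> length \<sigma>1" and J: "admissible J"
    and sl: "sorted_list_of_set J = greedy i @ ys"
    and next_sign: "0 < i \<and> ys \<noteq> [] \<longrightarrow> \<sigma>2 (hd ys) \<noteq> \<sigma>1 ! (i - 1)"
  shows "remdups_adj (map \<sigma>2 ys) = drop i \<sigma>1"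
proof -
  have "take i \<sigma>1 = [] \<or> map \<sigma>2 ys = [] \<or> last (take i \<sigma>1) \<noteq> hd (map \<sigma>2 ys)"
  proof (cases "i = 0 \<or> ys = []")
    case False
    then have "take i \<sigma>1 = take (i - 1) \<sigma>1 @ [\<sigma>1 ! (i - 1)]"
      using i by (metis Suc_diff_1 Suc_le_lessD bot_nat_0.not_eq_extremum take_Suc_conv_app_nth)
    then show ?thesis using False next_sign by (simp add: hd_map)
  qed auto
  then have "\<sigma>1 = take i \<sigma>1 @ remdups_adj (map \<sigma>2 ys)"
    using J sl greedy_word[OF i] remdups_adj_append' remdups_adj_take_\<sigma>1
    unfolding admissible_def by (metis map_append)
  then show ?thesis by (metis append_take_drop_id same_append_eq)
qed

definition T :: "nat \<Rightarrow> (real^('n::{finite,linorder})) set" where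
  "T i = {x \<in> L. \<exists>ys. sorted_list_of_set (zeros x) = greedy i @ ys \<and>
                     (0 < i \<and> ys \<noteq> [] \<longrightarrow> \<sigma>2 (hd ys) \<noteq> \<sigma>1 ! (i - 1))}"

definition U :: "nat \<Rightarrow> (real^('n::{finite,linorder})) set" where
  "U i = {x \<in> L. \<exists>ys. sorted_list_of_set (zeros x) = greedy (Suc i) @ ys}"

lemma T_0: "T 0 = L"
  unfolding T_def by auto

definition zero_at :: "nat \<Rightarrow> real^('n::{finite,linorder}) \<Rightarrow> real^('n::{finite,linorder})" where
  "zero_at i x = (\<chi> k. if k = emb i then 0 else x $ k)"

lemma continuous_zero_at: "continuous_on S (zero_at i)"
  unfolding zero_at_def
proof (intro continuous_on_vec_lambda)
  fix k
  show "continuous_on S (\<lambda>x. if k = emb i then 0 else x $ k)"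
    by (cases "k = emb i") (simp_all add: continuous_intros)
qed

lemma zeros_zero_at: "zeros (zero_at i x) = insert (emb i) (zeros x)"
  unfolding zeros_def zero_at_def by auto

lemma next_after_greedy:
  assumes i: "i < length \<sigma>1" and J: "admissible J"
    and sl: "sorted_list_of_set J = greedy i @ ys"
    and next_sign: "0 < i \<and> ys \<noteq> [] \<longrightarrow> \<sigma>2 (hd ys) \<noteq> \<sigma>1 ! (i - 1)"
  obtains y ys' where "ys = y # ys'" "\<sigma>2 y = \<sigma>1 ! i" "emb i \<le> y"
proof -
  have "remdups_adj (map \<sigma>2 ys) = drop i \<sigma>1" using reduced_rest[OF _ J sl next_sign] i by simp
  then obtain y ys' where ys: "ys = y # ys'" and hy: "\<sigma>2 y = \<sigma>1 ! i"
    using i by (cases ys) (auto simp: hd_drop_conv_nth dest: arg_cong[of _ _ hd])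
  have "sorted_wrt (<) (greedy i @ ys)" using sl strict_sorted_list_of_set by metis
  then have "0 < i \<longrightarrow> emb (i - 1) < y" using ys by (cases i) (auto simp: sorted_wrt_append)
  then show ?thesis using that ys hy emb_least[OF i hy] by auto
qed

text \<open>\<open>zero_at i\<close> maps \<open>T i\<close> into \<open>U i\<close>: either \<open>emb i\<close> is already the next zero, or the new zero
  doubles the sign \<open>\<sigma>1 ! i\<close> of the next zero, which does not change the reduced string.\<close>

lemma zero_at_T_U:
  assumes i: "i < length \<sigma>1" and x: "x \<in> T i"
  shows "zero_at i x \<in> U i"
proof -
  obtain ys where sl: "sorted_list_of_set (zeros x) = greedy i @ ys"
    and next_sign: "0 < i \<and> ys \<noteq> [] \<longrightarrow> \<sigma>2 (hd ys) \<noteq> \<sigma>1 ! (i - 1)"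
    and xL: "x \<in> L"
    using x unfolding T_def by blast
  have adm: "admissible (zeros x)" and box: "x \<in> sign_box sgn2" using xL unfolding L_def by auto
  obtain y ys' where ys: "ys = y # ys'" and hy: "\<sigma>2 y = \<sigma>1 ! i" and le: "emb i \<le> y"
    using next_after_greedy[OF i adm sl next_sign] .
  have sorted: "sorted_wrt (<) (greedy i @ ys)" using sl strict_sorted_list_of_set by metis
  have set_old: "set (greedy i @ ys) = zeros x" using arg_cong[OF sl, of set] by simp
  have box': "zero_at i x \<in> sign_box sgn2" using box unfolding sign_box_def zero_at_def by auto
  show ?thesis
  proof (cases "emb i = y")
    case True
    then have "zeros (zero_at i x) = zeros x" using zeros_zero_at set_old ys by auto
    moreover have "sorted_list_of_set (zeros x) = greedy (Suc i) @ ys'" using sl ys True by simp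
    ultimately show ?thesis using box' adm unfolding U_def L_def by auto
  next
    case False
    let ?new = "greedy i @ emb i # ys"
    have "sorted_wrt (<) ?new"
      using sorted False le emb_strict_mono[OF i] unfolding ys
      by (auto simp: sorted_wrt_append dest: order.strict_trans2)
    moreover have "set ?new = zeros (zero_at i x)" using set_old zeros_zero_at by auto
    ultimately have sl_new: "sorted_list_of_set (zeros (zero_at i x)) = ?new"
      using sorted_list_of_set_sorted by metis
    have "map \<sigma>2 ?new = map \<sigma>2 (greedy i) @ \<sigma>1 ! i # \<sigma>1 ! i # map \<sigma>2 ys'"
      using ys hy emb_sign[OF i] by simp
    moreover have "map \<sigma>2 (greedy i @ ys) = map \<sigma>2 (greedy i) @ \<sigma>1 ! i # map \<sigma>2 ys'"
      using ys hy by simp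
    ultimately have "admissible (zeros (zero_at i x))"
      using adm sl sl_new remdups_adj_double unfolding admissible_def by metis
    then show ?thesis using box' sl_new unfolding U_def L_def by auto
  qed
qed

text \<open>Second map: the zeros of sign \<open>\<sigma>1 ! i\<close> directly following \<open>emb i\<close> (those with no zero of
  the other sign in between) are made nonzero.  The new value at such \<open>k\<close> is built from the
  coordinates in the gap between \<open>emb i\<close> and \<open>k\<close>, so that the map is continuous.\<close>

definition gap :: "nat \<Rightarrow> ('n::{finite,linorder}) \<Rightarrow> ('n::{finite,linorder}) set" where
  "gap i k = {j. emb i < j \<and> j < k \<and> \<sigma>2 j \<noteq> \<sigma>1 ! i}"

definition clear_run :: "nat \<Rightarrow> real^('n::{finite,linorder}) \<Rightarrow> real^('n::{finite,linorder})" where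
  "clear_run i x = (\<chi> k. if emb i < k \<and> \<sigma>2 k = \<sigma>1 ! i
      then - sgn2 k * max \<bar>x $ k\<bar> (\<Prod>j\<in>gap i k. \<bar>x $ j\<bar>) else x $ k)"

lemma continuous_clear_run: "continuous_on S (clear_run i)"
  unfolding clear_run_def
proof (intro continuous_on_vec_lambda)
  fix k
  show "continuous_on S (\<lambda>x. if emb i < k \<and> \<sigma>2 k = \<sigma>1 ! i
      then - sgn2 k * max \<bar>x $ k\<bar> (\<Prod>j\<in>gap i k. \<bar>x $ j\<bar>) else x $ k)"
  proof (cases "emb i < k \<and> \<sigma>2 k = \<sigma>1 ! i")
    case True
    then show ?thesis unfolding if_P[OF True] by (intro continuous_intros)
  next
    case False
    then show ?thesis unfolding if_not_P[OF False] by (intro continuous_intros)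
  qed
qed

lemma clear_run_eq_0:
  "clear_run i x $ k = 0 \<longleftrightarrow>
     x $ k = 0 \<and> (emb i < k \<and> \<sigma>2 k = \<sigma>1 ! i \<longrightarrow> (\<exists>j\<in>gap i k. x $ j = 0))"
proof (cases "emb i < k \<and> \<sigma>2 k = \<sigma>1 ! i")
  case True
  have "(\<Prod>j\<in>gap i k. \<bar>x $ j\<bar>) = 0 \<longleftrightarrow> (\<exists>j\<in>gap i k. x $ j = 0)" by simp
  moreover have "max a b = 0 \<longleftrightarrow> a = 0 \<and> b = 0" if "0 \<le> a" "0 \<le> b" for a b :: real
    using that by (auto simp: max_def)
  ultimately have "max \<bar>x $ k\<bar> (\<Prod>j\<in>gap i k. \<bar>x $ j\<bar>) = 0 \<longleftrightarrow> x $ k = 0 \<and> (\<exists>j\<in>gap i k. x $ j = 0)"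
    by (simp add: prod_nonneg)
  then show ?thesis using True sgn2_nonzero[of k] unfolding clear_run_def by simp
next
  case False
  then have "clear_run i x $ k = x $ k" unfolding clear_run_def by auto
  then show ?thesis using False by auto
qed

lemma clear_run_sign_box:
  assumes "x \<in> sign_box sgn2"
  shows "clear_run i x \<in> sign_box sgn2"
  unfolding sign_box_def mem_Collect_eq
proof
  fix k
  have x: "sgn2 k * x $ k \<le> 0" "\<bar>x $ k\<bar> \<le> 1" for k using assms unfolding sign_box_def by auto
  show "sgn2 k * clear_run i x $ k \<le> 0 \<and> \<bar>clear_run i x $ k\<bar> \<le> 1"
  proof (cases "emb i < k \<and> \<sigma>2 k = \<sigma>1 ! i")
    case True
    let ?v = "max \<bar>x $ k\<bar> (\<Prod>j\<in>gap i k. \<bar>x $ j\<bar>)"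
    have "(\<Prod>j\<in>gap i k. \<bar>x $ j\<bar>) \<le> 1" using x by (intro prod_le_1) auto
    then have v: "0 \<le> ?v" "?v \<le> 1" using x by auto
    have "clear_run i x $ k = - sgn2 k * ?v" using True unfolding clear_run_def by simp
    moreover have "sgn2 k * sgn2 k = 1" "\<bar>sgn2 k\<bar> = 1" using sign_values[of k] by auto
    ultimately have "sgn2 k * clear_run i x $ k = - ?v" "\<bar>clear_run i x $ k\<bar> = ?v"
      using v by (simp_all add: abs_mult mult.assoc[symmetric])
    then show ?thesis using v by simp
  next
    case False
    then have "clear_run i x $ k = x $ k" unfolding clear_run_def by auto
    then show ?thesis using x by simp
  qed
qed

lemma zeros_clear_run:
  assumes i: "i < length \<sigma>1" and sl: "sorted_list_of_set (zeros x) = greedy (Suc i) @ ys"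
  shows "zeros (clear_run i x) = set (greedy (Suc i) @ dropWhile (\<lambda>k. \<sigma>2 k = \<sigma>1 ! i) ys)"
proof (rule set_eqI)
  fix k
  let ?Q = "\<lambda>k. \<sigma>2 k = \<sigma>1 ! i"
  have sorted: "sorted_wrt (<) (greedy (Suc i) @ ys)" using sl strict_sorted_list_of_set by metis
  have zero_iff: "x $ j = 0 \<longleftrightarrow> j \<in> set (greedy (Suc i)) \<or> j \<in> set ys" for j
    using arg_cong[OF sl, of set] unfolding zeros_def by auto
  have greedy_le: "j \<le> emb i" if "j \<in> set (greedy (Suc i))" for j
    using that emb_strict_mono[OF i] by (auto simp: le_less)
  have ys_gt: "emb i < j" if "j \<in> set ys" for j
    using sorted that by (auto simp: sorted_wrt_append)
  have sorted_ys: "sorted_wrt (<) ys" using sorted by (simp add: sorted_wrt_append)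
  show "k \<in> zeros (clear_run i x) \<longleftrightarrow> k \<in> set (greedy (Suc i) @ dropWhile ?Q ys)"
  proof (cases "k \<le> emb i")
    case True
    then have "k \<notin> set ys" "k \<notin> set (dropWhile ?Q ys)"
      using ys_gt True by (meson leD set_dropWhileD)+
    then show ?thesis using True zero_iff[of k] clear_run_eq_0[of i x k]
      unfolding zeros_def by auto
  next
    case False
    then have "k \<notin> set (greedy (Suc i))" using greedy_le by force
    moreover have "(\<exists>j\<in>gap i k. x $ j = 0) \<longleftrightarrow> (\<exists>j\<in>set ys. j < k \<and> \<not> ?Q j)"
      using zero_iff greedy_le ys_gt unfolding gap_def by (force simp: not_le)
    ultimately show ?thesis
      using False zero_iff[of k] clear_run_eq_0[of i x k] in_set_dropWhile_sorted[OF sorted_ys, of k ?Q]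
      unfolding zeros_def by (auto simp: not_le le_less)
  qed
qed

text \<open>\<open>clear_run i\<close> maps \<open>U i\<close> into \<open>T (Suc i)\<close>: the deleted zeros repeat the last letter of
  \<open>take (Suc i) \<sigma>1\<close>, so the reduced string is unchanged, and the next zero has a new sign.\<close>

lemma clear_run_U_T:
  assumes i: "i < length \<sigma>1" and x: "x \<in> U i"
  shows "clear_run i x \<in> T (Suc i)"
proof -
  let ?Q = "\<lambda>k. \<sigma>2 k = \<sigma>1 ! i"
  obtain ys where sl: "sorted_list_of_set (zeros x) = greedy (Suc i) @ ys" and xL: "x \<in> L"
    using x unfolding U_def by blast
  let ?new = "greedy (Suc i) @ dropWhile ?Q ys"
  have adm: "admissible (zeros x)" and box: "x \<in> sign_box sgn2" using xL unfolding L_def by auto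
  have "sorted_wrt (<) (greedy (Suc i) @ ys)" using sl strict_sorted_list_of_set by metis
  moreover have "subseq ?new (greedy (Suc i) @ ys)"
    by (intro list_emb_append_mono suffix_imp_subseq suffix_dropWhile) auto
  ultimately have "sorted_wrt (<) ?new" using sorted_wrt_subseq by blast
  then have sl_new: "sorted_list_of_set (zeros (clear_run i x)) = ?new"
    using zeros_clear_run[OF i sl] sorted_list_of_set_sorted by metis
  have word: "map \<sigma>2 (greedy (Suc i) @ zs) = take (Suc i) \<sigma>1 @ map \<sigma>2 zs" for zs
    using greedy_word[of "Suc i"] i by simp
  have last_take: "take (Suc i) \<sigma>1 \<noteq> []" "last (take (Suc i) \<sigma>1) = \<sigma>1 ! i"
    using i by (simp_all add: take_Suc_conv_app_nth)
  have "remdups_adj (map \<sigma>2 (greedy (Suc i) @ zs)) =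
        remdups_adj (take (Suc i) \<sigma>1) @ remdups_adj (map \<sigma>2 (dropWhile ?Q zs))" for zs
    unfolding word remdups_adj_append''[OF last_take(1)] last_take(2) dropWhile_map
    by (simp add: comp_def)
  then have "admissible (zeros (clear_run i x))"
    using adm sl sl_new unfolding admissible_def by (metis dropWhile_idem)
  moreover have "dropWhile ?Q ys \<noteq> [] \<longrightarrow> \<sigma>2 (hd (dropWhile ?Q ys)) \<noteq> \<sigma>1 ! i"
    using hd_dropWhile by blast
  ultimately show ?thesis
    using clear_run_sign_box[OF box] sl_new unfolding T_def L_def by auto
qed

text \<open>Each passage \<open>T i \<rightarrow> U i \<rightarrow> T (Suc i)\<close> is homotopic to the identity inside \<open>L\<close>, since both
  maps only add or only remove zeros.\<close>

lemma stage_step: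
  assumes i: "i < length \<sigma>1"
  shows "\<exists>g. homotopic_with_canon (\<lambda>_. True) (T i) L id g \<and> g ` T i \<subseteq> T (Suc i)"
proof -
  have "homotopic_with_canon (\<lambda>_. True) (T i) L id (zero_at i)"
    using zero_at_T_U[OF i] zeros_zero_at
    by (intro linear_step continuous_zero_at) (auto simp: T_def U_def)
  moreover have "homotopic_with_canon (\<lambda>_. True) (U i) L id (clear_run i)"
    using clear_run_U_T[OF i] clear_run_eq_0
    by (intro linear_step continuous_clear_run) (auto simp: T_def U_def zeros_def)
  ultimately have "homotopic_with_canon (\<lambda>_. True) (T i) L id (clear_run i \<circ> zero_at i)"
    using zero_at_T_U[OF i] by (intro homotopic_id_compose) auto
  then show ?thesis using zero_at_T_U[OF i] clear_run_U_T[OF i] by (intro exI) auto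
qed

definition centre :: "real^('n::{finite,linorder})" where
  "centre = (\<chi> k. if k \<in> set (greedy (length \<sigma>1)) then 0 else - sgn2 k)"

lemma zeros_centre: "zeros centre = set (greedy (length \<sigma>1))"
  unfolding zeros_def centre_def using sgn2_nonzero by auto

lemma zeros_last_stage:
  assumes "x \<in> T (length \<sigma>1)"
  shows "zeros x = set (greedy (length \<sigma>1))"
proof -
  obtain ys where sl: "sorted_list_of_set (zeros x) = greedy (length \<sigma>1) @ ys"
    and next_sign: "0 < length \<sigma>1 \<and> ys \<noteq> [] \<longrightarrow> \<sigma>2 (hd ys) \<noteq> \<sigma>1 ! (length \<sigma>1 - 1)"
    and "x \<in> L"
    using assms unfolding T_def by blast
  then have "remdups_adj (map \<sigma>2 ys) = []"
    using reduced_rest[OF _ _ sl next_sign] unfolding L_def by simp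
  then show ?thesis using arg_cong[OF sl, of set] by simp
qed

lemma centre_in_L: "centre \<in> L"
proof -
  have "sorted_wrt (<) (greedy (length \<sigma>1))"
    unfolding sorted_wrt_iff_nth_less by (auto intro: emb_strict_mono)
  then have "sorted_list_of_set (zeros centre) = greedy (length \<sigma>1)"
    unfolding zeros_centre by (rule sorted_list_of_set_sorted)
  then have "admissible (zeros centre)"
    unfolding admissible_def using greedy_word[of "length \<sigma>1"] remdups_adj_take_\<sigma>1[of "length \<sigma>1"]
    by simp
  moreover have "sgn2 k * centre $ k \<le> 0 \<and> \<bar>centre $ k\<bar> \<le> 1" for k
    using sign_values[of k] unfolding centre_def by auto
  then have "centre \<in> sign_box sgn2" unfolding sign_box_def by simp
  ultimately show ?thesis unfolding L_def by simp
qed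

lemma contractible_L: "contractible L"
proof -
  have "homotopic_with_canon (\<lambda>_. True) (T (length \<sigma>1)) L id (\<lambda>_. centre)"
    using centre_in_L zeros_last_stage zeros_centre
    by (intro linear_step continuous_on_const) (auto simp: T_def)
  then show ?thesis
    using contractible_by_stages[of "length \<sigma>1" T centre] stage_step unfolding T_0 by blast
qed

end


theorem lemma1p15:
  fixes \<sigma>2 :: "'n::{finite,linorder} \<Rightarrow> int" and \<sigma>1 :: "int list"
  assumes "ext_string (map \<sigma>2 (sorted_list_of_set UNIV))"
    and "sign_string \<sigma>1"
    and "subseq \<sigma>1 (map \<sigma>2 (sorted_list_of_set UNIV))"
  shows "contractible {x :: real^('n::{finite,linorder}).
           (\<forall>k. real_of_int (\<sigma>2 k) * x $ k \<le> 0 \<and> \<bar>x $ k\<bar> \<le> 1) \<and>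
           reduced_string \<sigma>1 (map \<sigma>2 (sorted_list_of_set {k. x $ k = 0}))}"
proof -
  have "\<And>k. \<sigma>2 k \<in> {-1, 1}" using assms(1) unfolding ext_string_def by auto
  then interpret embedded_sign_string \<sigma>2 \<sigma>1 using assms(2,3) by unfold_locales
  show ?thesis using contractible_L L_eq by simp
qed

end
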